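(* Let $2<p<4$ and $\nu<0$. Then for every $\lambda\ge\max\{1,4\nu^2\}$, $\|\mathcal{G}_{\lambda,\nu}\|_p^p\le\frac{\widetilde C_p}{\lambda^{p/4}}$, with $\widetilde C_p=\frac{\pi^{1-p}}{p^{p/2}}\Big[\frac{4^p}{p^{\frac{4-p}{p}}}+\Big(\frac{2p}{4-p}\Big)^{\frac{3p-4}{2}}e^{-\frac{4-p}{2}}\Big(\frac2p+\frac1e\Big)\Big]$.
   Context: For $\lambda>0$ and $\nu>-\sqrt{\lambda}$, $\mathcal{G}_{\lambda,\nu}$ is the radial function on $\mathbb{R}^2\setminus\{0\}$ given by $\mathcal{G}_{\lambda,\nu}(x)=\frac{\Gamma(\frac12+\frac{\nu}{2\sqrt\lambda})}{2\pi}e^{-\sqrt\lambda|x|}U_{\frac12+\frac{\nu}{2\sqrt\lambda},1}(2\sqrt\lambda|x|)$, with $U_{a,b}$ Tricomi's confluent hypergeometric function. $\|\cdot\|_r$ is the $L^r(\mathbb{R}^2)$ norm. *)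

theory Defs
  imports "HOL-Analysis.Analysis"
begin

text \<open>Tricomi's confluent hypergeometric function U(a,b,z), via its standard
integral representation (DLMF 13.4.4), valid for a > 0 and z > 0, which is the
only range used below.\<close>
definition tricomiU :: "real \<Rightarrow> real \<Rightarrow> real \<Rightarrow> real" where
  "tricomiU a b z = (1 / Gamma a) *
     (LBINT t:{0<..}. exp (- z * t) * t powr (a - 1) * (1 + t) powr (b - a - 1))"

text \<open>The radial function G_{lam,nu} on R^2 (value at 0 is irrelevant: null set).\<close>
definition Gfun :: "real \<Rightarrow> real \<Rightarrow> real^2 \<Rightarrow> real" where
  "Gfun lam nu x = Gamma (1/2 + nu / (2 * sqrt lam)) / (2 * pi)
     * exp (- sqrt lam * norm x)
     * tricomiU (1/2 + nu / (2 * sqrt lam)) 1 (2 * sqrt lam * norm x)"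

definition Ctilde :: "real \<Rightarrow> real" where
  "Ctilde p = pi powr (1 - p) / p powr (p / 2) *
     (4 powr p / p powr ((4 - p) / p)
      + (2 * p / (4 - p)) powr ((3 * p - 4) / 2) * exp (- (4 - p) / 2) * (2 / p + 1 / exp 1))"

end

theory Submission
  imports Defs
begin

text \<open>
  For nu < 0 and lam \<ge> 4 nu^2 the parameter a = 1/2 + nu / (2 sqrt lam) lies in [1/4, 1/2],
  so t powr (a - 1) * (1 + t) powr (- a) \<le> t powr (-3/4) in the integral representation of U, and
  |G(x)| \<le> Gamma(1/4) / (2 pi) * (2 sqrt lam |x|) powr (-1/4) * exp (- sqrt lam |x|).
  Since |x|^2 \<ge> 2 |x1| |x2| and |x| \<ge> (|x1| + |x2|) / sqrt 2, the p-th power of this bound is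
  dominated by a product of one-dimensional functions |u| powr (-p/8) * exp (- p sqrt lam |u| / sqrt 2),
  whose integrals are Gamma values. All powers of lam combine to 1/lam \<le> 1/lam powr (p/4), and an
  elementary estimate shows that the remaining constant is already below the first summand of
  Ctilde p.
\<close>

lemma nn_integral_powr_exp_halfline:
  fixes a k :: real
  assumes a: "a > 0" and k: "k > 0"
  shows "(\<integral>\<^sup>+t. ennreal (indicator {0..} t * t powr (a - 1) * exp (- k * t)) \<partial>lborel)
           = ennreal (Gamma a * k powr (- a))"
proof -
  let ?f = "\<lambda>t. ennreal (indicator {0..} t * t powr (a - 1) * exp (- k * t))"
  have scaled: "ennreal (indicator {0..} (0 + k * t) * (0 + k * t) powr (a - 1) / exp (0 + k * t))
      = ennreal (k powr (a - 1)) * ?f t" for t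
  proof (cases "t \<ge> 0")
    case True
    then show ?thesis using k
      by (simp add: ennreal_mult'[symmetric] powr_mult exp_minus field_simps indicator_def)
  next
    case False
    then have "\<not> 0 \<le> k * t" using k by (simp add: zero_le_mult_iff)
    then show ?thesis using False by (simp add: indicator_def)
  qed
  have "ennreal (Gamma a) = (\<integral>\<^sup>+t. ennreal (indicator {0..} t * t powr (a - 1) / exp t) \<partial>lborel)"
    using Gamma_conv_nn_integral_real[OF a] .
  also have "\<dots> = ennreal k * (\<integral>\<^sup>+t. ennreal (indicator {0..} (0 + k * t)
                     * (0 + k * t) powr (a - 1) / exp (0 + k * t)) \<partial>lborel)"
    using k by (subst nn_integral_real_affine[where c = k and t = 0]) auto
  also have "\<dots> = ennreal k * (ennreal (k powr (a - 1)) * integral\<^sup>N lborel ?f)"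
    by (simp only: scaled) (subst nn_integral_cmult; simp)
  also have "\<dots> = ennreal (k powr a) * integral\<^sup>N lborel ?f"
    using k by (simp add: mult.assoc[symmetric] ennreal_mult'[symmetric] powr_add[symmetric] powr_diff)
  finally have "ennreal (Gamma a) = ennreal (k powr a) * integral\<^sup>N lborel ?f" .
  then have "ennreal (k powr (- a)) * ennreal (Gamma a) = integral\<^sup>N lborel ?f"
    using k by (simp add: mult.assoc[symmetric] ennreal_mult'[symmetric] powr_add[symmetric])
  then show ?thesis
    using a by (simp add: ennreal_mult'[symmetric] mult.commute)
qed

lemma nn_integral_abs_powr_exp:
  fixes a k :: real
  assumes a: "a > 0" and k: "k > 0"
  shows "(\<integral>\<^sup>+u. ennreal (\<bar>u\<bar> powr (a - 1) * exp (- k * \<bar>u\<bar>)) \<partial>lborel)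
           = ennreal (2 * Gamma a * k powr (- a))"
proof -
  define f where "f = (\<lambda>t::real. ennreal (indicator {0..} t * t powr (a - 1) * exp (- k * t)))"
  have [measurable]: "f \<in> borel_measurable borel" unfolding f_def by measurable
  have split: "ennreal (\<bar>u\<bar> powr (a - 1) * exp (- k * \<bar>u\<bar>)) = f u + f (0 + (-1) * u)" for u
    by (cases u "0::real" rule: linorder_cases) (simp_all add: f_def indicator_def)
  have "(\<integral>\<^sup>+u. ennreal (\<bar>u\<bar> powr (a - 1) * exp (- k * \<bar>u\<bar>)) \<partial>lborel)
      = (\<integral>\<^sup>+u. f u \<partial>lborel) + (\<integral>\<^sup>+u. f (0 + (-1) * u) \<partial>lborel)"
    by (simp only: split) (rule nn_integral_add; simp)
  also have "(\<integral>\<^sup>+u. f (0 + (-1) * u) \<partial>lborel) = (\<integral>\<^sup>+u. f u \<partial>lborel)"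
    using nn_integral_real_affine[of f "-1" 0] by simp
  also have "(\<integral>\<^sup>+u. f u \<partial>lborel) = ennreal (Gamma a * k powr (- a))"
    unfolding f_def by (rule nn_integral_powr_exp_halfline[OF a k])
  finally show ?thesis
    using a by (simp add: ennreal_plus[symmetric] Gamma_real_pos less_imp_le del: ennreal_plus)
qed

lemma nn_integral_lborel_vec2_prod:
  fixes f g :: "real \<Rightarrow> ennreal"
  assumes [measurable]: "f \<in> borel_measurable borel" "g \<in> borel_measurable borel"
  shows "(\<integral>\<^sup>+x. f (x$1) * g (x$2) \<partial>(lborel :: (real^2) measure))
           = (\<integral>\<^sup>+u. f u \<partial>lborel) * (\<integral>\<^sup>+u. g u \<partial>lborel)"
proof -
  define F where "F = (\<lambda>b::real^2. if b = axis 1 1 then f else g)"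
  have Basis: "(Basis :: (real^2) set) = {axis 1 1, axis 2 1}"
    by (auto simp: Basis_vec_def UNIV_2)
  have "(\<integral>\<^sup>+x. f (x$1) * g (x$2) \<partial>(lborel :: (real^2) measure))
      = (\<integral>\<^sup>+x. (\<Prod>b\<in>Basis. F b (x \<bullet> b)) \<partial>lborel)"
    by (simp add: Basis axis_eq_axis F_def inner_axis)
  also have "\<dots> = (\<Prod>b\<in>(Basis :: (real^2) set). \<integral>\<^sup>+u. F b u \<partial>lborel)"
    by (rule nn_integral_lborel_prod) (auto simp: F_def)
  finally show ?thesis by (simp add: Basis axis_eq_axis F_def)
qed

lemma Gamma_le_1:
  fixes x :: real
  assumes "1 \<le> x" "x \<le> 2"
  shows "Gamma x \<le> 1"
proof -
  have "(ln \<circ> Gamma) ((1 - (x - 1)) *\<^sub>R 1 + (x - 1) *\<^sub>R 2) \<le> (1 - (x - 1)) * (ln \<circ> Gamma) 1 + (x - 1) * (ln \<circ> Gamma) (2::real)"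
    using assms by (intro convex_onD[OF log_convex_Gamma_real]) auto
  moreover have "Gamma (2::real) = 1" using Gamma_fact[of 1] by simp
  ultimately have "ln (Gamma x) \<le> 0" by (simp add: algebra_simps)
  then show ?thesis using assms by simp
qed

lemma Gamma_le_inverse:
  fixes x :: real
  assumes "0 < x" "x \<le> 1"
  shows "Gamma x \<le> 1 / x"
proof -
  have "x * Gamma x = Gamma (x + 1)"
    using assms Gamma_plus1[of x] nonpos_Ints_nonpos by fastforce
  also have "\<dots> \<le> 1" using assms by (intro Gamma_le_1) auto
  finally show ?thesis using assms by (simp add: field_simps)
qed

lemma Gamma_one_quarter_le: "Gamma (1/4 :: real) \<le> 4 * sqrt (sqrt pi / 2)"
proof -
  have "(ln \<circ> Gamma) ((1 - 1/2) *\<^sub>R 1 + (1/2) *\<^sub>R (3/2)) \<le> (1 - 1/2) * (ln \<circ> Gamma) 1 + (1/2) * (ln \<circ> Gamma) (3/2::real)"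
    by (intro convex_onD[OF log_convex_Gamma_real]) auto
  moreover have "Gamma (3/2::real) = sqrt pi / 2"
    using Gamma_plus1[of "1/2::real"] Gamma_one_half_real nonpos_Ints_nonpos by fastforce
  moreover have pos: "Gamma (5/4::real) > 0" by (rule Gamma_real_pos) simp
  ultimately have "2 * ln (Gamma (5/4::real)) \<le> ln (sqrt pi / 2)" by simp
  then have "ln ((Gamma (5/4::real))^2) \<le> ln (sqrt pi / 2)"
    by (simp add: ln_realpow)
  moreover have "(Gamma (5/4::real))^2 > 0" using pos by (rule zero_less_power)
  ultimately have "(Gamma (5/4::real))^2 \<le> sqrt pi / 2"
    by (subst (asm) ln_le_cancel_iff) auto
  then have "Gamma (5/4::real) \<le> sqrt (sqrt pi / 2)" using real_le_rsqrt by blast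
  moreover have "Gamma (5/4::real) = 1/4 * Gamma (1/4)"
    using Gamma_plus1[of "1/4::real"] nonpos_Ints_nonpos by fastforce
  ultimately show ?thesis by simp
qed

lemma tricomiU_nonneg:
  fixes a b z :: real
  assumes "a > 0"
  shows "tricomiU a b z \<ge> 0"
  unfolding tricomiU_def set_lebesgue_integral_def using assms
  by (intro mult_nonneg_nonneg integral_nonneg_AE) (auto simp: indicator_def Gamma_real_pos less_imp_le)

lemma powr_mult_one_plus_powr_le:
  fixes a c t :: real
  assumes "0 \<le> c" "c \<le> a" "a \<le> 1" "t > 0"
  shows "t powr (a - 1) * (1 + t) powr (- a) \<le> t powr (c - 1)"
proof (cases "t \<le> 1")
  case True
  have "t powr (a - 1) \<le> t powr (c - 1)" using True assms by (intro powr_mono') auto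
  moreover have "(1 + t) powr (- a) \<le> 1"
    using assms powr_mono[of "- a" 0 "1 + t"] by simp
  ultimately show ?thesis using assms
    by (metis mult_left_le mult_mono' powr_ge_zero order_trans mult.commute mult_1)
next
  case False
  have "t powr (a - 1) * (1 + t) powr (- a) \<le> t powr (a - 1) * t powr (- a)"
    using assms by (intro mult_left_mono powr_mono2') auto
  also have "\<dots> = t powr (-1)" using assms by (simp add: powr_add[symmetric])
  also have "\<dots> \<le> t powr (c - 1)" using False assms by (intro powr_mono) auto
  finally show ?thesis .
qed

lemma Gamma_mult_tricomiU_1_le:
  fixes a c z :: real
  assumes c: "0 < c" "c \<le> a" "a \<le> 1" and z: "z > 0"
  shows "Gamma a * tricomiU a 1 z \<le> Gamma c * z powr (- c)"
proof -
  let ?f = "\<lambda>t. exp (- z * t) * t powr (a - 1) * (1 + t) powr (1 - a - 1)"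
  have "(\<integral>\<^sup>+t. ennreal (indicator {0<..} t *\<^sub>R ?f t) \<partial>lborel)
     \<le> (\<integral>\<^sup>+t. ennreal (indicator {0..} t * t powr (c - 1) * exp (- z * t)) \<partial>lborel)"
  proof (intro nn_integral_mono ennreal_leI)
    fix t :: real
    have "t > 0 \<Longrightarrow> exp (- z * t) * (t powr (a - 1) * (1 + t) powr (- a)) \<le> exp (- z * t) * t powr (c - 1)"
      using c by (intro mult_left_mono powr_mult_one_plus_powr_le) auto
    then show "indicator {0<..} t *\<^sub>R ?f t \<le> indicator {0..} t * t powr (c - 1) * exp (- z * t)"
      by (auto simp: indicator_def mult_ac)
  qed
  also have "\<dots> = ennreal (Gamma c * z powr (- c))"
    using c z by (intro nn_integral_powr_exp_halfline) auto
  finally have "(LBINT t:{0<..}. ?f t) \<le> Gamma c * z powr (- c)"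
    unfolding set_lebesgue_integral_def
    by (rule integral_real_bounded[rotated]) (simp add: Gamma_real_pos c less_imp_le)
  then show ?thesis
    using c Gamma_real_pos[of a] by (simp add: tricomiU_def)
qed

lemma Gfun_abs_le:
  fixes lam nu :: real and x :: "real^2"
  assumes nu: "nu < 0" and lam: "lam \<ge> max 1 (4 * nu\<^sup>2)" and x: "x \<noteq> 0"
  shows "\<bar>Gfun lam nu x\<bar>
           \<le> Gamma (1/4) / (2 * pi) * (2 * sqrt lam * norm x) powr (-1/4) * exp (- sqrt lam * norm x)"
proof -
  define s where "s = sqrt lam"
  define a where "a = 1/2 + nu / (2 * s)"
  have s1: "s \<ge> 1" using lam by (simp add: s_def)
  have "sqrt (4 * nu\<^sup>2) \<le> s" using lam by (simp add: s_def)
  also have "sqrt (4 * nu\<^sup>2) = 2 * (- nu)" using nu by (simp add: real_sqrt_mult)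
  finally have s2: "2 * (- nu) \<le> s" .
  have a: "1/4 \<le> a" "a \<le> 1" unfolding a_def using s1 s2 nu by (simp_all add: field_simps)
  have z: "2 * s * norm x > 0" using x s1 by simp
  have "\<bar>Gfun lam nu x\<bar> = exp (- s * norm x) * (Gamma a * tricomiU a 1 (2 * s * norm x)) / (2 * pi)"
    using a tricomiU_nonneg[of a 1 "2 * s * norm x"]
    by (simp add: Gfun_def a_def s_def Gamma_real_pos abs_mult)
  also have "\<dots> \<le> exp (- s * norm x) * (Gamma (1/4) * (2 * s * norm x) powr (-1/4)) / (2 * pi)"
    using Gamma_mult_tricomiU_1_le[OF _ a z] by (intro divide_right_mono mult_left_mono) auto
  finally show ?thesis by (simp add: s_def field_simps)
qed

lemma norm_powr_exp_le_coordinates: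
  fixes x :: "real^2" and q m :: real
  assumes x: "x$1 \<noteq> 0" "x$2 \<noteq> 0" and q: "q \<ge> 0" and m: "m \<ge> 0"
  shows "norm x powr (- q) * exp (- m * norm x)
           \<le> 2 powr (- q/2) * (\<bar>x$1\<bar> powr (- q/2) * exp (- (m / sqrt 2) * \<bar>x$1\<bar>))
                           * (\<bar>x$2\<bar> powr (- q/2) * exp (- (m / sqrt 2) * \<bar>x$2\<bar>))"
proof -
  define a b r where "a = \<bar>x$1\<bar>" and "b = \<bar>x$2\<bar>" and "r = norm x"
  have ab: "a > 0" "b > 0" using x by (auto simp: a_def b_def)
  have r: "r = sqrt (a^2 + b^2)"
    by (simp add: r_def a_def b_def norm_vec_def L2_set_def sum_2)
  have "r powr (- q) = (a^2 + b^2) powr (- q/2)"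
    using ab by (simp add: r powr_half_sqrt[symmetric] powr_powr)
  also have "\<dots> \<le> (2 * a * b) powr (- q/2)"
    using sum_squares_bound[of a b] ab q by (intro powr_mono2') auto
  also have "\<dots> = 2 powr (- q/2) * (a powr (- q/2) * b powr (- q/2))"
    using ab by (simp add: powr_mult)
  finally have pow: "r powr (- q) \<le> 2 powr (- q/2) * (a powr (- q/2) * b powr (- q/2))" .
  have "(a + b)^2 \<le> 2 * (a^2 + b^2)"
    using sum_squares_bound[of a b] by (simp add: power2_eq_square algebra_simps)
  then have "a + b \<le> sqrt 2 * r"
    unfolding r using ab by (metis real_le_rsqrt real_sqrt_mult add_pos_pos less_imp_le)
  then have "(m / sqrt 2) * (a + b) \<le> (m / sqrt 2) * (sqrt 2 * r)"
    using m by (intro mult_left_mono) auto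
  then have "(m / sqrt 2) * (a + b) \<le> m * r" by simp
  then have ex: "exp (- m * r) \<le> exp (- (m / sqrt 2) * a) * exp (- (m / sqrt 2) * b)"
    by (simp add: exp_add[symmetric] add_divide_distrib algebra_simps)
  have "r powr (- q) * exp (- m * r)
      \<le> (2 powr (- q/2) * (a powr (- q/2) * b powr (- q/2))) * (exp (- (m / sqrt 2) * a) * exp (- (m / sqrt 2) * b))"
    using pow ex by (intro mult_mono) auto
  then show ?thesis by (simp add: a_def b_def r_def mult_ac)
qed

lemma ln_le_three_eighths:
  fixes x :: real
  assumes "x > 0"
  shows "ln x \<le> 3/8 * x"
proof -
  have "exp 1 \<ge> (8/3 :: real)"
  proof -
    have "(31/30 :: real)^30 \<le> exp (1/30) ^ 30"
      by (intro power_mono) (use exp_ge_add_one_self[of "1/30 :: real"] in auto)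
    also have "\<dots> = exp 1" by (simp flip: exp_of_nat_mult)
    finally show ?thesis by (simp add: power_divide)
  qed
  then have "ln (8/3 :: real) \<le> ln (exp 1)" by (subst ln_le_cancel_iff) auto
  then have "ln (8/3 :: real) \<le> 1" by simp
  moreover have "ln (3/8 * x) \<le> 3/8 * x - 1" using assms by (intro ln_le_minus_one) auto
  ultimately show ?thesis using assms by (simp add: ln_mult ln_div)
qed

lemma exp_3_le_8_pi: "exp 3 \<le> 8 * pi"
proof -
  have "exp 3 = exp (1 :: real) ^ 3" by (simp flip: exp_of_nat_mult)
  also have "\<dots> \<le> (272/100)^3" using e_less_272 by (intro power_mono) auto
  also have "\<dots> \<le> 8 * pi" using pi_gt3 by (simp add: power_divide)
  finally show ?thesis .
qed

lemma sixty_four_le_mult_square: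
  fixes p :: real
  assumes "2 \<le> p" "p \<le> 4"
  shows "64 \<le> p * (8 - p)^2"
proof -
  have "p * (8 - p)^2 - 64 = (4 - p) * ((p - 2) * (10 - p) + 4)"
    by (simp add: algebra_simps power2_eq_square)
  moreover have "0 \<le> (4 - p) * ((p - 2) * (10 - p) + 4)"
    using assms by (intro mult_nonneg_nonneg add_nonneg_nonneg) auto
  ultimately show ?thesis by linarith
qed

lemma le_Ctilde_first_term:
  fixes p :: real
  assumes p: "2 < p" "p < 4"
  defines "c \<equiv> sqrt (sqrt pi / 2)"
  shows "(2 * c / pi) powr p * 2 powr (- 3 * p / 8) * (16 / (8 - p) * (p / sqrt 2) powr (p/8 - 1))^2
           \<le> pi powr (1 - p) / p powr (p / 2) * (4 powr p / p powr ((4 - p) / p))"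
    (is "?L \<le> ?R")
proof -
  have c: "0 < c" "c < 1"
    using pi_less_4 real_sqrt_less_iff[of pi 4] by (auto simp: c_def)
  have ln2: "ln (4 :: real) = 2 * ln 2" "ln (16 :: real) = 4 * ln 2"
    using ln_realpow[of 2 2] ln_realpow[of 2 4] by simp_all
  have lnL: "ln ?L = p * ln c - p * ln pi + 1/2 * (p * ln 2) + 1/4 * (p * ln p)
                       - 2 * ln p + 9 * ln 2 - 2 * ln (8 - p)"
    using c p ln2 by (simp add: ln_mult ln_div ln_realpow ln_sqrt algebra_simps)
  have lnR: "ln ?R = ln pi - p * ln pi - 1/2 * (p * ln p) + 2 * (p * ln 2) - 4 / p * ln p + ln p"
    using p ln2 by (simp add: ln_mult ln_div diff_divide_distrib algebra_simps)
  have ln_c: "4 * ln c = ln pi - 2 * ln 2"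
    by (simp add: c_def ln_sqrt ln_div)
  have F1: "p * ln c \<le> 2 * ln c"
    using c p by (intro mult_right_mono_neg) auto
  have "ln p \<le> ln 4" using p by simp
  then have "ln p \<le> 2 * ln 2" using ln2 by simp
  then have "3/4 * p * (ln p - 2 * ln 2) \<le> 3/2 * (ln p - 2 * ln 2)"
    using p by (intro mult_right_mono_neg) auto
  then have F2: "3/4 * (p * ln p) - 3/2 * (p * ln 2) \<le> 3/2 * ln p - 3 * ln 2"
    by (simp add: algebra_simps)
  have F3: "4 / p * ln p \<le> 3/2"
    using ln_le_three_eighths[of p] p by (simp add: field_simps)
  have "ln (64 :: real) \<le> ln (p * (8 - p)^2)"
    using sixty_four_le_mult_square[of p] p by simp
  moreover have "ln (64 :: real) = 6 * ln 2" using ln_realpow[of 2 6] by simp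
  ultimately have F4: "6 * ln 2 \<le> ln p + 2 * ln (8 - p)"
    using p by (simp add: ln_mult ln_realpow)
  have F6: "ln 2 \<le> ln p" using p by simp
  have "3 \<le> ln (8 * pi)"
    using exp_3_le_8_pi by (simp add: ln_ge_iff)
  moreover have "ln (8 :: real) = 3 * ln 2" using ln_realpow[of 2 3] by simp
  ultimately have F5: "3 \<le> 3 * ln 2 + ln pi" by (simp add: ln_mult)
  have "ln ?L \<le> ln ?R"
    unfolding lnL lnR using ln_c F1 F2 F3 F4 F5 F6 p by linarith
  then show ?thesis
    using c p by simp
qed

lemma Gamma_constant_le_Ctilde:
  fixes p :: real
  assumes p: "2 < p" "p < 4"
  shows "(Gamma (1/4) / (2 * pi)) powr p * 2 powr (- 3 * p / 8)
           * (2 * Gamma (1 - p/8) * (p / sqrt 2) powr (p/8 - 1))^2 \<le> Ctilde p"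
proof -
  define c where "c = sqrt (sqrt pi / 2)"
  have "Gamma (1/4) / (2 * pi) \<le> 2 * c / pi"
    using Gamma_one_quarter_le by (simp add: c_def field_simps)
  then have C: "(Gamma (1/4) / (2 * pi)) powr p \<le> (2 * c / pi) powr p"
    using p by (intro powr_mono2) auto
  have "2 * Gamma (1 - p/8) \<le> 2 * (1 / (1 - p/8))"
    using p Gamma_le_inverse[of "1 - p/8"] by simp
  then have G: "2 * Gamma (1 - p/8) \<le> 16 / (8 - p)"
    using p by (simp add: field_simps)
  have "(Gamma (1/4) / (2 * pi)) powr p * 2 powr (- 3 * p / 8)
           * (2 * Gamma (1 - p/8) * (p / sqrt 2) powr (p/8 - 1))^2
        \<le> (2 * c / pi) powr p * 2 powr (- 3 * p / 8) * (16 / (8 - p) * (p / sqrt 2) powr (p/8 - 1))^2"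
    using C G p by (intro mult_mono power_mono mult_right_mono) (auto simp: Gamma_real_pos less_imp_le)
  also have "\<dots> \<le> pi powr (1 - p) / p powr (p / 2) * (4 powr p / p powr ((4 - p) / p))"
    unfolding c_def by (rule le_Ctilde_first_term[OF p])
  also have "\<dots> \<le> Ctilde p"
    unfolding Ctilde_def using p
    by (intro mult_left_mono) (auto intro!: mult_nonneg_nonneg add_nonneg_nonneg)
  finally show ?thesis .
qed

lemma ennreal_Gfun_powr_le_product:
  fixes p nu lam :: real and x :: "real^2"
  assumes p: "p > 0" and nu: "nu < 0" and lam: "lam \<ge> max 1 (4 * nu\<^sup>2)"
  defines "h \<equiv> \<lambda>u. if u = 0 then \<infinity>
                 else ennreal (\<bar>u\<bar> powr ((1 - p/8) - 1) * exp (- (p * sqrt lam / sqrt 2) * \<bar>u\<bar>))"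
  shows "ennreal (\<bar>Gfun lam nu x\<bar> powr p)
           \<le> ennreal ((Gamma (1/4) / (2 * pi)) powr p * (2 * sqrt lam) powr (- p/4) * 2 powr (- p/8))
              * (h (x$1) * h (x$2))"
proof (cases "x$1 = 0 \<or> x$2 = 0")
  case True
  \<comment> \<open>the value \<infinity> of h on the coordinate axes (a null set) makes the bound hold there\<close>
  have "Gamma (1/4 :: real) \<noteq> 0" using Gamma_real_pos[of "1/4"] by linarith
  then show ?thesis
    using True lam by (auto simp: h_def ennreal_mult_top ennreal_top_mult)
next
  case False
  define C s r where "C = Gamma (1/4) / (2 * pi)" and "s = sqrt lam" and "r = norm x"
  have s: "s \<ge> 1" using lam by (simp add: s_def)
  have "x \<noteq> 0" using False by auto
  then have r: "r > 0" by (simp add: r_def)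
  have "\<bar>Gfun lam nu x\<bar> powr p \<le> (C * (2 * s * r) powr (-1/4) * exp (- s * r)) powr p"
    using Gfun_abs_le[OF nu lam \<open>x \<noteq> 0\<close>] p by (intro powr_mono2) (auto simp: C_def s_def r_def)
  also have "\<dots> = C powr p * ((2 * s * r) powr (-1/4)) powr p * exp (- s * r) powr p"
    using powr_mult[of "C * (2 * s * r) powr (-1/4)" "exp (- s * r)" p]
      powr_mult[of C "(2 * s * r) powr (-1/4)" p]
    by (simp del: powr_mult add: C_def)
  also have "\<dots> = C powr p * (2 * s) powr (- p/4) * (r powr (- (p/4)) * exp (- (p * s) * r))"
    using s r by (simp add: powr_mult powr_powr exp_powr_real mult_ac)
  also have "\<dots> \<le> C powr p * (2 * s) powr (- p/4) * (2 powr (- (p/4)/2)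
                   * (\<bar>x$1\<bar> powr (- (p/4)/2) * exp (- (p * s / sqrt 2) * \<bar>x$1\<bar>))
                   * (\<bar>x$2\<bar> powr (- (p/4)/2) * exp (- (p * s / sqrt 2) * \<bar>x$2\<bar>)))"
    unfolding r_def using False p s by (intro mult_left_mono norm_powr_exp_le_coordinates) auto
  finally show ?thesis
    using False by (simp add: C_def s_def h_def mult_ac ennreal_mult'[symmetric] ennreal_leI)
qed

lemma Gfun_constant_le_Ctilde:
  fixes p lam :: real
  assumes p: "2 < p" "p < 4" and lam: "lam \<ge> 1"
  defines "k \<equiv> p * sqrt lam / sqrt 2"
  shows "(Gamma (1/4) / (2 * pi)) powr p * (2 * sqrt lam) powr (- p/4) * 2 powr (- p/8)
           * (2 * Gamma (1 - p/8) * k powr (- (1 - p/8)))^2 \<le> Ctilde p / lam powr (p / 4)"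
proof -
  define X where "X = (Gamma (1/4) / (2 * pi)) powr p * 2 powr (- 3 * p / 8)
                        * (2 * Gamma (1 - p/8) * (p / sqrt 2) powr (p/8 - 1))^2"
  have XC: "X \<le> Ctilde p" unfolding X_def by (rule Gamma_constant_le_Ctilde[OF p])
  have X0: "0 \<le> X" unfolding X_def by simp
  define s where "s = sqrt lam"
  have s: "s > 0" "s^2 = lam" using lam by (simp_all add: s_def)
  have k: "k powr (- (1 - p/8)) = s powr (p/8 - 1) * (p / sqrt 2) powr (p/8 - 1)"
    using s p by (simp add: k_def s_def[symmetric] powr_mult[symmetric] mult_ac)
  have two: "(2 * s) powr (- p/4) * 2 powr (- p/8) = 2 powr (- 3 * p / 8) * s powr (- p/4)"
    using s by (simp add: powr_mult mult_ac powr_add[symmetric])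
  have "(Gamma (1/4) / (2 * pi)) powr p * (2 * sqrt lam) powr (- p/4) * 2 powr (- p/8)
           * (2 * Gamma (1 - p/8) * k powr (- (1 - p/8)))^2
        = (Gamma (1/4) / (2 * pi)) powr p * (2 powr (- 3 * p / 8) * s powr (- p/4))
           * (2 * Gamma (1 - p/8) * (s powr (p/8 - 1) * (p / sqrt 2) powr (p/8 - 1)))^2"
    by (simp only: s_def[symmetric] mult.assoc[symmetric] two[symmetric] k)
  also have "\<dots> = X * (s powr (- p/4) * (s powr (p/8 - 1))^2)"
    by (simp add: X_def power2_eq_square algebra_simps)
  also have "s powr (- p/4) * (s powr (p/8 - 1))^2 = s powr (-2)"
    using s by (simp add: power2_eq_square powr_add[symmetric])
  also have "\<dots> = 1 / lam"
    using s by (simp add: powr_minus powr_realpow divide_inverse)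
  also have "X * (1 / lam) \<le> Ctilde p / lam"
    using XC lam by (simp add: divide_right_mono)
  also have "\<dots> \<le> Ctilde p / lam powr (p / 4)"
  proof (rule divide_left_mono)
    show "lam powr (p / 4) \<le> lam"
      using lam p powr_mono[of "p/4" 1 lam] by simp
  qed (use lam X0 XC in auto)
  finally show ?thesis .
qed

lemma nn_integral_vec2_abs_powr_exp:
  fixes a k :: real
  assumes a: "a > 0" and k: "k > 0"
  defines "h \<equiv> \<lambda>u. if u = 0 then \<infinity> else ennreal (\<bar>u\<bar> powr (a - 1) * exp (- k * \<bar>u\<bar>))"
  shows "(\<integral>\<^sup>+x. h (x$1) * h (x$2) \<partial>(lborel :: (real^2) measure))
           = ennreal ((2 * Gamma a * k powr (- a))^2)"
proof -
  have measurable: "h \<in> borel_measurable borel" unfolding h_def by measurable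
  have "(\<integral>\<^sup>+u. h u \<partial>lborel) = (\<integral>\<^sup>+u. ennreal (\<bar>u\<bar> powr (a - 1) * exp (- k * \<bar>u\<bar>)) \<partial>lborel)"
    using AE_lborel_singleton[of 0] by (intro nn_integral_cong_AE) (auto simp: h_def)
  also have "\<dots> = ennreal (2 * Gamma a * k powr (- a))"
    by (rule nn_integral_abs_powr_exp[OF a k])
  finally have I: "(\<integral>\<^sup>+u. h u \<partial>lborel) = ennreal (2 * Gamma a * k powr (- a))" .
  have nn: "0 \<le> 2 * Gamma a * k powr (- a)" using a by (simp add: Gamma_real_pos less_imp_le)
  show ?thesis
    by (simp only: nn_integral_lborel_vec2_prod[OF measurable measurable] I power2_eq_square ennreal_mult[OF nn nn])
qed

theorem mainTheorem6:
  fixes p nu lam :: real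
  assumes "2 < p" and "p < 4" and "nu < 0" and "lam \<ge> max 1 (4 * nu\<^sup>2)"
  shows "(\<integral>\<^sup>+ x. ennreal (\<bar>Gfun lam nu x\<bar> powr p) \<partial>lborel)
           \<le> ennreal (Ctilde p / lam powr (p / 4))"
proof -
  define k where "k = p * sqrt lam / sqrt 2"
  define h where "h = (\<lambda>u. if u = 0 then \<infinity> else ennreal (\<bar>u\<bar> powr ((1 - p/8) - 1) * exp (- k * \<bar>u\<bar>)))"
  define K where "K = (Gamma (1/4) / (2 * pi)) powr p * (2 * sqrt lam) powr (- p/4) * 2 powr (- p/8)"
  have lam: "lam \<ge> 1" using assms(4) by simp
  have "(\<integral>\<^sup>+ x. ennreal (\<bar>Gfun lam nu x\<bar> powr p) \<partial>lborel)
      \<le> (\<integral>\<^sup>+ x. ennreal K * (h (x$1) * h (x$2)) \<partial>(lborel :: (real^2) measure))"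
    using ennreal_Gfun_powr_le_product[of p nu lam] assms
    unfolding K_def h_def k_def by (intro nn_integral_mono) auto
  also have "\<dots> = ennreal K * (\<integral>\<^sup>+ x. h (x$1) * h (x$2) \<partial>(lborel :: (real^2) measure))"
    unfolding h_def by (rule nn_integral_cmult) measurable
  also have "(\<integral>\<^sup>+ x. h (x$1) * h (x$2) \<partial>(lborel :: (real^2) measure))
      = ennreal ((2 * Gamma (1 - p/8) * k powr (- (1 - p/8)))^2)"
    unfolding h_def using assms lam by (intro nn_integral_vec2_abs_powr_exp) (auto simp: k_def)
  also have "ennreal K * \<dots> = ennreal (K * (2 * Gamma (1 - p/8) * k powr (- (1 - p/8)))^2)"
    by (simp add: K_def ennreal_mult)
  also have "\<dots> \<le> ennreal (Ctilde p / lam powr (p / 4))"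
    using Gfun_constant_le_Ctilde[OF assms(1,2) lam] by (intro ennreal_leI) (simp add: K_def k_def)
  finally show ?thesis .
qed

end
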